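(* Let $G$ be a finite graph with at least one edge, and let $a \ge 1$ be its arboricity. Then $G$ contains a block vertex $v$ with $\deg_G(v) \le 2a-1$.
   Context: A block of a graph is a maximal biconnected component. A vertex is a cut vertex if it lies in two or more blocks; otherwise it is a block vertex. The arboricity of a graph is the minimum number of forests whose union covers all its edges. *)

theory Defs
  imports Main
begin

definition simple_graph :: "'a set \<Rightarrow> 'a set set \<Rightarrow> bool" where
  "simple_graph V E \<longleftrightarrow> finite V \<and>
     (\<forall>e\<in>E. \<exists>x y. e = {x, y} \<and> x \<noteq> y \<and> x \<in> V \<and> y \<in> V)"

definition degree :: "'a set set \<Rightarrow> 'a \<Rightarrow> nat" where
  "degree E v = card {e \<in> E. v \<in> e}"

definition connected_on :: "'a set set \<Rightarrow> 'a set \<Rightarrow> bool" where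
  "connected_on E S \<longleftrightarrow>
     (\<forall>x\<in>S. \<forall>y\<in>S. (x, y) \<in> {(u, w). {u, w} \<in> E \<and> u \<in> S \<and> w \<in> S}\<^sup>*)"

text \<open>Biconnected (nonseparable) vertex set: nonempty, induces a connected subgraph, and
  remains connected after deleting any single vertex (so K1 and K2 qualify).\<close>
definition biconnected_on :: "'a set \<Rightarrow> 'a set set \<Rightarrow> 'a set \<Rightarrow> bool" where
  "biconnected_on V E S \<longleftrightarrow> S \<noteq> {} \<and> S \<subseteq> V \<and> connected_on E S \<and>
     (\<forall>x\<in>S. connected_on E (S - {x}))"

definition is_block :: "'a set \<Rightarrow> 'a set set \<Rightarrow> 'a set \<Rightarrow> bool" where
  "is_block V E B \<longleftrightarrow> biconnected_on V E B \<and>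
     (\<forall>B'. biconnected_on V E B' \<and> B \<subseteq> B' \<longrightarrow> B' = B)"

definition cut_vertex :: "'a set \<Rightarrow> 'a set set \<Rightarrow> 'a \<Rightarrow> bool" where
  "cut_vertex V E v \<longleftrightarrow> (\<exists>B1 B2. B1 \<noteq> B2 \<and> is_block V E B1 \<and> is_block V E B2 \<and>
                                  v \<in> B1 \<and> v \<in> B2)"

definition block_vertex :: "'a set \<Rightarrow> 'a set set \<Rightarrow> 'a \<Rightarrow> bool" where
  "block_vertex V E v \<longleftrightarrow> v \<in> V \<and> \<not> cut_vertex V E v"

definition has_cycle :: "'a set set \<Rightarrow> bool" where
  "has_cycle F \<longleftrightarrow> (\<exists>cs. length cs \<ge> 3 \<and> distinct cs \<and>
     (\<forall>i < length cs. {cs ! i, cs ! ((i + 1) mod length cs)} \<in> F))"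

definition forest :: "'a set set \<Rightarrow> bool" where
  "forest F \<longleftrightarrow> \<not> has_cycle F"

definition arboricity :: "'a set set \<Rightarrow> nat" where
  "arboricity E = (LEAST k. \<exists>f :: nat \<Rightarrow> 'a set set.
      (\<forall>i<k. f i \<subseteq> E \<and> forest (f i)) \<and> E = (\<Union>i<k. f i))"

end

theory Submission
  imports Defs
begin

text \<open>Call a connected vertex set S with at least two vertices an end part at c if c \<in> S and
  no edge joins S - {c} to a vertex outside S. An end part of minimum size is biconnected:
  a separating vertex x would leave a component of S - {x} avoiding c, which together with x
  is a smaller end part. So S is a block, and every vertex of S other than c lies in no other
  block. If the edges are covered by a forests, at most a (|S| - 1) edges lie inside S, so the
  degrees within S sum to at most 2a (|S| - 1). Since c has a neighbour in S, some other
  vertex of S has degree at most 2a - 1 within S, which is its degree in G.\<close>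

lemma doubleton_other_end:
  assumes "e = {x, y}" "x \<noteq> y" "u \<in> e"
  obtains t where "e = {u, t}" "t \<noteq> u" "t \<in> e"
  using assms that by (metis insert_commute insert_iff singletonD)

lemma simple_graph_edge:
  assumes "simple_graph V E" "e \<in> E"
  obtains x y where "e = {x, y}" "x \<noteq> y" "x \<in> V" "y \<in> V"
  using assms unfolding simple_graph_def by blast

lemma simple_graph_doubletons:
  "simple_graph V E \<Longrightarrow> \<forall>e\<in>E. \<exists>x y. e = {x, y} \<and> x \<noteq> y"
  unfolding simple_graph_def by fast

lemma simple_graph_card_edge:
  assumes "simple_graph V E" "e \<in> E"
  shows "card e = 2"
  using simple_graph_edge[OF assms] by (metis card_2_iff)

lemma simple_graph_edge_at:
  assumes "simple_graph V E" "e \<in> E" "u \<in> e"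
  obtains t where "e = {u, t}" "t \<noteq> u" "u \<in> V" "t \<in> V"
proof -
  obtain x y where xy: "e = {x, y}" "x \<noteq> y" "x \<in> V" "y \<in> V"
    using simple_graph_edge[OF assms(1,2)] .
  moreover obtain t where "e = {u, t}" "t \<noteq> u" "t \<in> e"
    using doubleton_other_end[OF xy(1,2) assms(3)] .
  ultimately show ?thesis using that assms(3) by blast
qed

lemma simple_graph_finite_edges:
  assumes "simple_graph V E"
  shows "finite E"
proof -
  have "E \<subseteq> Pow V" "finite V" using assms unfolding simple_graph_def by force+
  then show ?thesis by (meson finite_Pow_iff finite_subset)
qed

subsection \<open>Connectivity inside a vertex set\<close>

definition induced_adj :: "'a set set \<Rightarrow> 'a set \<Rightarrow> ('a \<times> 'a) set" where
  "induced_adj E A = {(u, w). {u, w} \<in> E \<and> u \<in> A \<and> w \<in> A}"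

definition component :: "'a set set \<Rightarrow> 'a set \<Rightarrow> 'a \<Rightarrow> 'a set" where
  "component E A w = {t. (w, t) \<in> (induced_adj E A)\<^sup>*}"

lemma connected_on_iff_induced_adj:
  "connected_on E S \<longleftrightarrow> (\<forall>x\<in>S. \<forall>y\<in>S. (x, y) \<in> (induced_adj E S)\<^sup>*)"
  unfolding connected_on_def induced_adj_def by simp

lemma induced_adj_rtrancl_mono:
  "A \<subseteq> B \<Longrightarrow> (x, y) \<in> (induced_adj E A)\<^sup>* \<Longrightarrow> (x, y) \<in> (induced_adj E B)\<^sup>*"
  by (rule rtrancl_mono[THEN subsetD]) (auto simp: induced_adj_def)

lemma induced_adj_rtrancl_sym:
  "(x, y) \<in> (induced_adj E A)\<^sup>* \<Longrightarrow> (y, x) \<in> (induced_adj E A)\<^sup>*"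
  by (rule symD[OF sym_rtrancl]) (auto simp: sym_def induced_adj_def insert_commute)

lemma induced_adj_rtrancl_closed:
  "(x, y) \<in> (induced_adj E A)\<^sup>* \<Longrightarrow> x \<in> A \<Longrightarrow> y \<in> A"
  by (induction rule: rtrancl_induct) (auto simp: induced_adj_def)

lemma induced_adj_rtrancl_crosses:
  assumes "(w, t) \<in> (induced_adj E A)\<^sup>*" "w \<in> C" "t \<notin> C"
  shows "\<exists>a b. a \<in> A \<inter> C \<and> b \<in> A - C \<and> {a, b} \<in> E"
  using assms
proof (induction rule: rtrancl_induct)
  case (step y z)
  then show ?case by (cases "y \<in> C") (auto simp: induced_adj_def)
qed simp

lemma connected_onI_hub:
  assumes "\<And>p. p \<in> S \<Longrightarrow> (w, p) \<in> (induced_adj E S)\<^sup>*"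
  shows "connected_on E S"
  unfolding connected_on_iff_induced_adj
proof (intro ballI)
  fix p q assume pq: "p \<in> S" "q \<in> S"
  have "(p, w) \<in> (induced_adj E S)\<^sup>*" using assms[OF pq(1)] by (rule induced_adj_rtrancl_sym)
  moreover have "(w, q) \<in> (induced_adj E S)\<^sup>*" using assms[OF pq(2)] .
  ultimately show "(p, q) \<in> (induced_adj E S)\<^sup>*" by (rule rtrancl_trans)
qed

lemma component_subset: "w \<in> A \<Longrightarrow> component E A w \<subseteq> A"
  unfolding component_def using induced_adj_rtrancl_closed by fast

lemma component_edge_closed:
  "u \<in> component E A w \<Longrightarrow> {u, t} \<in> E \<Longrightarrow> u \<in> A \<Longrightarrow> t \<in> A \<Longrightarrow> t \<in> component E A w"
  unfolding component_def induced_adj_def by (auto intro: rtrancl_into_rtrancl)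

lemma component_reach:
  "t \<in> component E A w \<Longrightarrow> (w, t) \<in> (induced_adj E (component E A w))\<^sup>*"
  unfolding component_def mem_Collect_eq
proof (induction rule: rtrancl_induct)
  case (step y z)
  then have "(y, z) \<in> induced_adj E {t. (w, t) \<in> (induced_adj E A)\<^sup>*}"
    unfolding induced_adj_def by (auto intro: rtrancl_into_rtrancl)
  with step.IH show ?case by (rule rtrancl_into_rtrancl)
qed simp

lemma connected_on_component: "connected_on E (component E A w)"
  using component_reach by (rule connected_onI_hub)

lemma disconnected_component_avoiding:
  assumes "\<not> connected_on E A"
  obtains w where "w \<in> A" "c \<notin> component E A w" "component E A w \<subset> A"
proof -
  obtain y z where yz: "y \<in> A" "z \<in> A" "z \<notin> component E A y"
    using assms unfolding connected_on_iff_induced_adj component_def by blast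
  show ?thesis
  proof (cases "c \<in> component E A y")
    case False
    then show ?thesis using that[of y] yz component_subset[of y A E] by blast
  next
    case True
    have "c \<notin> component E A z"
    proof
      assume "c \<in> component E A z"
      then have "(c, z) \<in> (induced_adj E A)\<^sup>*"
        unfolding component_def by (simp add: induced_adj_rtrancl_sym)
      with True have "(y, z) \<in> (induced_adj E A)\<^sup>*"
        unfolding component_def by (simp add: rtrancl_trans)
      with yz(3) show False unfolding component_def by simp
    qed
    moreover have "c \<in> A" using True component_subset[OF yz(1)] by blast
    ultimately show ?thesis using that[of z] yz component_subset[of z A E] by blast
  qed
qed

subsection \<open>Forests\<close>

lemma has_cycle_mono: "F \<subseteq> G \<Longrightarrow> has_cycle F \<Longrightarrow> has_cycle G"
  unfolding has_cycle_def by blast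

lemma forest_subset: "forest G \<Longrightarrow> F \<subseteq> G \<Longrightarrow> forest F"
  using has_cycle_mono forest_def by blast

lemma forest_singleton:
  assumes "x \<noteq> y"
  shows "forest {{x, y}}"
  unfolding forest_def has_cycle_def
proof
  assume "\<exists>cs. 3 \<le> length cs \<and> distinct cs \<and>
    (\<forall>i<length cs. {cs ! i, cs ! ((i + 1) mod length cs)} \<in> {{x, y}})"
  then obtain cs where l: "3 \<le> length cs" and d: "distinct cs"
    and c: "\<forall>i<length cs. {cs ! i, cs ! ((i + 1) mod length cs)} = {x, y}" by auto
  have ne: "cs \<noteq> []" using l by auto
  with c[rule_format, of 0] c[rule_format, of 1] l have "{cs ! 0, cs ! 1} = {cs ! 1, cs ! 2}"
    by (simp add: numeral_2_eq_2)
  moreover have "cs ! 0 \<noteq> cs ! 1" "cs ! 0 \<noteq> cs ! 2"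
    using nth_eq_iff_index_eq[OF d, of 0 1] nth_eq_iff_index_eq[OF d, of 0 2] ne l by auto
  ultimately show False by (simp add: doubleton_eq_iff)
qed

definition path_in :: "'a set set \<Rightarrow> 'a list \<Rightarrow> bool" where
  "path_in F cs \<longleftrightarrow> distinct cs \<and> (\<forall>i. Suc i < length cs \<longrightarrow> {cs ! i, cs ! Suc i} \<in> F)"

lemma path_in_Cons:
  assumes "path_in F cs" "w \<notin> set cs" "{w, cs ! 0} \<in> F"
  shows "path_in F (w # cs)"
  unfolding path_in_def
proof (intro conjI allI impI)
  show "distinct (w # cs)" using assms(1,2) unfolding path_in_def by simp
next
  fix i assume "Suc i < length (w # cs)"
  then show "{(w # cs) ! i, (w # cs) ! Suc i} \<in> F"
    using assms(1,3) unfolding path_in_def by (cases i) auto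
qed

lemma path_in_chord_has_cycle:
  assumes "path_in F cs" "2 \<le> j" "j < length cs" "{cs ! j, cs ! 0} \<in> F"
  shows "has_cycle F"
  unfolding has_cycle_def
proof (intro exI[of _ "take (Suc j) cs"] conjI allI impI)
  have len: "length (take (Suc j) cs) = Suc j" using assms(3) by simp
  show "3 \<le> length (take (Suc j) cs)" using len assms(2) by simp
  show "distinct (take (Suc j) cs)" using assms(1) unfolding path_in_def by simp
next
  fix i assume "i < length (take (Suc j) cs)"
  then have "i \<le> j" using assms(3) by simp
  show "{take (Suc j) cs ! i, take (Suc j) cs ! ((i + 1) mod length (take (Suc j) cs))} \<in> F"
  proof (cases "i = j")
    case True
    then show ?thesis using assms(3,4) by simp
  next
    case False
    with \<open>i \<le> j\<close> have "Suc i < Suc j" by simp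
    then show ?thesis using assms(1,3) unfolding path_in_def by simp
  qed
qed

lemma forest_path_start_edge:
  assumes "forest F" "path_in F cs" "{cs ! 0, w} \<in> F" "w \<noteq> cs ! 0" "w \<in> set cs"
  shows "w = cs ! 1"
proof (rule ccontr)
  assume "w \<noteq> cs ! 1"
  obtain j where j: "j < length cs" "cs ! j = w" using assms(5) by (meson in_set_conv_nth)
  have "j \<noteq> 0" "j \<noteq> 1" using j(2) assms(4) \<open>w \<noteq> cs ! 1\<close> by metis+
  then have "2 \<le> j" by simp
  moreover have "{cs ! j, cs ! 0} \<in> F" using assms(3) j(2) by (simp add: insert_commute)
  ultimately have "has_cycle F" using path_in_chord_has_cycle[OF assms(2)] j(1) by blast
  with assms(1) show False unfolding forest_def by blast
qed

text \<open>The first vertex of a longest path is a leaf: any other edge at it would either extend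
  the path or close a cycle.\<close>

lemma forest_has_leaf:
  assumes fin: "finite F" and ne: "F \<noteq> {}" and edges: "\<forall>e\<in>F. \<exists>x y. e = {x, y} \<and> x \<noteq> y"
    and forest: "forest F"
  obtains v e where "e \<in> F" "v \<in> e" "\<And>e'. e' \<in> F \<Longrightarrow> v \<in> e' \<Longrightarrow> e' = e"
proof -
  define P where "P cs \<longleftrightarrow> path_in F cs \<and> 2 \<le> length cs \<and> set cs \<subseteq> \<Union>F" for cs
  have bound: "length cs < Suc (card (\<Union>F))" if "P cs" for cs
  proof -
    have "\<forall>e\<in>F. finite e" using edges by auto
    with fin have "finite (\<Union>F)" by blast
    then have "card (set cs) \<le> card (\<Union>F)" using that card_mono unfolding P_def by blast
    then show ?thesis using that distinct_card unfolding P_def path_in_def by fastforce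
  qed
  obtain e0 where "e0 \<in> F" using ne by blast
  then obtain x y where xy: "{x, y} \<in> F" "x \<noteq> y" using edges by force
  then have "P [x, y]" unfolding P_def path_in_def by (auto simp: less_Suc_eq)
  then obtain cs where cs: "P cs" and longest: "\<And>cs'. P cs' \<Longrightarrow> length cs' \<le> length cs"
    using ex_has_greatest_nat[of P "[x, y]" length] bound by blast
  have path: "path_in F cs" and len: "2 \<le> length cs" using cs unfolding P_def by auto
  have first: "{cs ! 0, cs ! 1} \<in> F" using path len unfolding path_in_def by auto
  have "e' = {cs ! 0, cs ! 1}" if e': "e' \<in> F" "cs ! 0 \<in> e'" for e'
  proof -
    obtain x y where "e' = {x, y}" "x \<noteq> y" using edges e'(1) by blast
    then obtain w where w: "e' = {cs ! 0, w}" "w \<noteq> cs ! 0"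
      using doubleton_other_end e'(2) by metis
    have "w \<in> set cs"
    proof (rule ccontr)
      assume "w \<notin> set cs"
      moreover have "{w, cs ! 0} \<in> F" using w(1) e'(1) by (simp add: insert_commute)
      ultimately have "path_in F (w # cs)" by (rule path_in_Cons[OF path])
      moreover have "set (w # cs) \<subseteq> \<Union>F" using cs w e' unfolding P_def by auto
      ultimately have "P (w # cs)" using len unfolding P_def by simp
      with longest show False by fastforce
    qed
    then have "w = cs ! 1" using forest_path_start_edge[OF forest path] w e'(1) by blast
    with w(1) show ?thesis by simp
  qed
  with first that show ?thesis by blast
qed

lemma card_forest_less:
  assumes "finite S" "S \<noteq> {}" "F \<subseteq> Pow S" "\<forall>e\<in>F. \<exists>x y. e = {x, y} \<and> x \<noteq> y" "forest F"
  shows "card F < card S"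
  using assms
proof (induction "card S" arbitrary: S F rule: less_induct)
  case less
  show ?case
  proof (cases "F = {}")
    case True
    then show ?thesis using less.prems(1,2) by (simp add: card_gt_0_iff)
  next
    case False
    have finF: "finite F" using less.prems(1,3) by (meson finite_Pow_iff finite_subset)
    obtain e v where e: "e \<in> F" "v \<in> e" and leaf: "\<And>e'. e' \<in> F \<Longrightarrow> v \<in> e' \<Longrightarrow> e' = e"
      by (rule forest_has_leaf[OF finF False less.prems(4,5)]) blast
    obtain x y where "e = {x, y}" "x \<noteq> y" using less.prems(4) e(1) by blast
    then obtain u where u: "e = {v, u}" "u \<noteq> v" using doubleton_other_end e(2) by metis
    have vS: "v \<in> S" and uS: "u \<in> S - {v}" using u e less.prems(3) by auto
    have "card (F - {e}) < card (S - {v})"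
    proof (rule less.hyps)
      show "card (S - {v}) < card S" using less.prems(1) vS by (rule card_Diff1_less)
      show "F - {e} \<subseteq> Pow (S - {v})" using leaf less.prems(3) by blast
      show "forest (F - {e})" using less.prems(5) forest_subset by blast
    qed (use less.prems(1,4) uS in auto)
    moreover have "card F \<ge> 1" using finF False by (simp add: Suc_leI card_gt_0_iff)
    ultimately show ?thesis using card_Diff_singleton[OF e(1)] card_Diff_singleton[OF vS] by linarith
  qed
qed

lemma arboricity_forest_cover:
  assumes "simple_graph V E"
  obtains f :: "nat \<Rightarrow> 'a set set"
  where "\<forall>i<arboricity E. f i \<subseteq> E \<and> forest (f i)" "E = (\<Union>i<arboricity E. f i)"
proof -
  obtain xs where xs: "set xs = E"
    using finite_list simple_graph_finite_edges[OF assms] by blast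
  define f where "f i = {xs ! i}" for i
  have "f i \<subseteq> E \<and> forest (f i)" if "i < length xs" for i
  proof -
    have "xs ! i \<in> E" using xs that by auto
    then obtain x y where "xs ! i = {x, y}" "x \<noteq> y" by (rule simple_graph_edge[OF assms])
    with \<open>xs ! i \<in> E\<close> show ?thesis unfolding f_def using forest_singleton by simp
  qed
  moreover have "E = (\<Union>i<length xs. f i)" using xs by (auto simp: f_def set_conv_nth)
  ultimately have "\<exists>f :: nat \<Rightarrow> 'a set set.
      (\<forall>i<length xs. f i \<subseteq> E \<and> forest (f i)) \<and> E = (\<Union>i<length xs. f i)" by blast
  then have "\<exists>f :: nat \<Rightarrow> 'a set set.
      (\<forall>i<arboricity E. f i \<subseteq> E \<and> forest (f i)) \<and> E = (\<Union>i<arboricity E. f i)"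
    unfolding arboricity_def by (rule LeastI)
  with that show ?thesis by blast
qed

subsection \<open>Counting edges\<close>

lemma sum_card_incident_edges:
  assumes "finite S" "F \<subseteq> Pow S" "\<forall>e\<in>F. card e = 2"
  shows "(\<Sum>v\<in>S. card {e \<in> F. v \<in> e}) = 2 * card F"
proof -
  have finF: "finite F" using assms(1,2) by (meson finite_Pow_iff finite_subset)
  have "(\<Sum>v\<in>S. card {e \<in> F. v \<in> e}) = (\<Sum>v\<in>S. \<Sum>e\<in>F. if v \<in> e then 1 else 0)"
    using finF by (simp add: sum.inter_filter[symmetric])
  also have "\<dots> = (\<Sum>e\<in>F. \<Sum>v\<in>S. if v \<in> e then 1 else 0)" by (rule sum.swap)
  also have "\<dots> = (\<Sum>e\<in>F. card e)"
  proof (rule sum.cong[OF refl])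
    fix e assume "e \<in> F"
    then have "{v \<in> S. v \<in> e} = e" using assms(2) by blast
    then show "(\<Sum>v\<in>S. if v \<in> e then 1 else 0) = card e"
      using assms(1) by (simp add: sum.inter_filter[symmetric])
  qed
  also have "\<dots> = 2 * card F" using assms(3) by simp
  finally show ?thesis .
qed

lemma card_edges_within_le:
  assumes G: "simple_graph V E" and S: "finite S" "S \<noteq> {}"
    and cover: "\<forall>i<k. f i \<subseteq> E \<and> forest (f i)" "E = (\<Union>i<k. f i)"
  shows "card {e \<in> E. e \<subseteq> S} \<le> k * (card S - 1)"
proof -
  define ES where "ES = {e \<in> E. e \<subseteq> S}"
  have bound: "card (f i \<inter> ES) \<le> card S - 1" if "i < k" for i
  proof -
    have "card (f i \<inter> ES) < card S"
    proof (rule card_forest_less[OF S])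
      show "f i \<inter> ES \<subseteq> Pow S" unfolding ES_def by blast
      show "\<forall>e\<in>f i \<inter> ES. \<exists>x y. e = {x, y} \<and> x \<noteq> y"
        using simple_graph_doubletons[OF G] by (auto simp: ES_def)
      show "forest (f i \<inter> ES)" using cover(1) that forest_subset by blast
    qed
    then show ?thesis by simp
  qed
  have "ES = (\<Union>i<k. f i \<inter> ES)" using cover(2) unfolding ES_def by blast
  then have "card ES \<le> (\<Sum>i<k. card (f i \<inter> ES))"
    using card_UN_le[of "{..<k}" "\<lambda>i. f i \<inter> ES"] by simp
  also have "\<dots> \<le> (\<Sum>i<k. card S - 1)" using bound by (intro sum_mono) simp
  finally show ?thesis unfolding ES_def by simp
qed

subsection \<open>End parts\<close>

definition end_part :: "'a set \<Rightarrow> 'a set set \<Rightarrow> 'a set \<Rightarrow> 'a \<Rightarrow> bool" where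
  "end_part V E S c \<longleftrightarrow> c \<in> S \<and> S \<subseteq> V \<and> 2 \<le> card S \<and> connected_on E S \<and>
     (\<forall>e\<in>E. \<forall>u\<in>S - {c}. u \<in> e \<longrightarrow> e \<subseteq> S)"

lemma end_partI:
  assumes "c \<in> S" "S \<subseteq> V" "2 \<le> card S" "connected_on E S"
    and "\<And>e u. e \<in> E \<Longrightarrow> u \<in> S - {c} \<Longrightarrow> u \<in> e \<Longrightarrow> e \<subseteq> S"
  shows "end_part V E S c"
proof -
  have "\<forall>e\<in>E. \<forall>u\<in>S - {c}. u \<in> e \<longrightarrow> e \<subseteq> S" using assms(5) by blast
  with assms(1-4) show ?thesis by (simp add: end_part_def)
qed

lemma end_partD:
  assumes "end_part V E S c"
  shows "c \<in> S" "S \<subseteq> V" "2 \<le> card S" "connected_on E S"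
  using assms by (simp_all add: end_part_def)

lemma end_part_closed:
  assumes "end_part V E S c" "e \<in> E" "u \<in> S" "u \<noteq> c" "u \<in> e"
  shows "e \<subseteq> S"
proof -
  have "\<forall>e\<in>E. \<forall>u\<in>S - {c}. u \<in> e \<longrightarrow> e \<subseteq> S" using assms(1) by (simp add: end_part_def)
  with assms(2-5) show ?thesis by blast
qed

lemma end_part_exists:
  assumes G: "simple_graph V E" and "E \<noteq> {}"
  obtains S c where "end_part V E S c"
proof -
  obtain e0 where e0: "e0 \<in> E" using assms(2) by blast
  then obtain x y where "e0 = {x, y}" "x \<noteq> y" "x \<in> V" "y \<in> V" by (rule simple_graph_edge[OF G])
  with e0 have xy: "{x, y} \<in> E" "x \<noteq> y" "x \<in> V" "y \<in> V" by simp_all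
  define S where "S = component E V x"
  have SV: "S \<subseteq> V" unfolding S_def using xy(3) by (rule component_subset)
  have xS: "x \<in> S" unfolding S_def component_def by simp
  have "y \<in> S" unfolding S_def using component_edge_closed[OF _ xy(1,3,4)] xS S_def by blast
  moreover have "finite S" using SV G finite_subset unfolding simple_graph_def by auto
  ultimately have "card {x, y} \<le> card S" using xS by (intro card_mono) auto
  then have card2: "2 \<le> card S" using xy(2) by simp
  have closed: "e \<subseteq> S" if e: "e \<in> E" "u \<in> S" "u \<in> e" for e u
  proof -
    obtain t where "e = {u, t}" "t \<noteq> u" "u \<in> V" "t \<in> V" by (rule simple_graph_edge_at[OF G e(1,3)])
    then show ?thesis using component_edge_closed[of u E V x t] e(1,2) unfolding S_def by blast
  qed
  have "connected_on E S" unfolding S_def by (rule connected_on_component)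
  then have "end_part V E S x" using xS SV card2 closed by (intro end_partI) auto
  then show ?thesis by (rule that)
qed

lemma end_part_finite:
  assumes "end_part V E S c"
  shows "finite S"
  using end_partD(3)[OF assms] by (intro card_ge_0_finite) simp

lemma connected_subset_end_part:
  assumes S: "end_part V E S c" and T: "connected_on E T" "c \<notin> T" "p \<in> T" "p \<in> S"
  shows "T \<subseteq> S"
proof
  fix q assume "q \<in> T"
  show "q \<in> S"
  proof (rule ccontr)
    assume "q \<notin> S"
    moreover have "(p, q) \<in> (induced_adj E T)\<^sup>*"
      using T(1,3) \<open>q \<in> T\<close> unfolding connected_on_iff_induced_adj by blast
    ultimately obtain a b where "a \<in> T \<inter> S" "b \<in> T - S" "{a, b} \<in> E"
      using induced_adj_rtrancl_crosses[OF _ T(4)] by blast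
    with end_part_closed[OF S] T(2) show False by blast
  qed
qed

lemma end_part_insert_component:
  assumes G: "simple_graph V E" and S: "end_part V E S c" and x: "x \<in> S"
    and w: "w \<in> S - {x}" and cC: "c \<notin> component E (S - {x}) w"
  shows "end_part V E (insert x (component E (S - {x}) w)) x"
proof -
  define C where "C = component E (S - {x}) w"
  define S' where "S' = insert x C"
  have CS: "C \<subseteq> S - {x}" unfolding C_def using w by (rule component_subset)
  have wC: "w \<in> C" unfolding C_def component_def by simp
  have closed: "e \<subseteq> S'" if edge: "e \<in> E" "u \<in> C" "u \<in> e" for e u
  proof -
    obtain t where e: "e = {u, t}" "t \<noteq> u" "u \<in> V" "t \<in> V"
      by (rule simple_graph_edge_at[OF G edge(1,3)])
    have "u \<in> S - {c}" using edge(2) CS cC unfolding C_def by blast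
    then have "t \<in> S" using end_part_closed[OF S edge(1)] edge(3) e(1) by blast
    then have "t \<in> S'"
      using component_edge_closed[of u E "S - {x}" w t] edge(1,2) e(1) CS
      unfolding S'_def C_def by blast
    then show ?thesis using e(1) edge(2) unfolding S'_def by blast
  qed
  have reach: "(w, p) \<in> (induced_adj E S')\<^sup>*" if "p \<in> C" for p
    using induced_adj_rtrancl_mono[of C S'] component_reach[of p E "S - {x}" w] that
    unfolding S'_def C_def by blast
  have SV: "S \<subseteq> V" and conS: "connected_on E S" using end_partD[OF S] by simp_all
  then have "(w, x) \<in> (induced_adj E S)\<^sup>*"
    using w x unfolding connected_on_iff_induced_adj by blast
  moreover have "x \<notin> C" using CS by blast
  ultimately obtain a b where ab: "a \<in> S \<inter> C" "b \<in> S - C" "{a, b} \<in> E"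
    using induced_adj_rtrancl_crosses[OF _ wC] by blast
  then have aC: "a \<in> C" and "b = x" using closed[of "{a, b}" a] unfolding S'_def by blast+
  with ab have "(a, x) \<in> induced_adj E S'" unfolding induced_adj_def S'_def by blast
  with reach[OF aC] have "(w, x) \<in> (induced_adj E S')\<^sup>*" by (rule rtrancl_into_rtrancl)
  with reach have conS': "connected_on E S'" unfolding S'_def by (intro connected_onI_hub) blast
  have "card {x, w} \<le> card S'"
    using CS x wC end_part_finite[OF S] unfolding S'_def by (intro card_mono) (auto intro: finite_subset)
  then have card2: "2 \<le> card S'" using w by auto
  have closed': "e \<subseteq> S'" if "e \<in> E" "u \<in> S' - {x}" "u \<in> e" for e u
    using closed that unfolding S'_def by blast
  have "end_part V E S' x"
    by (rule end_partI[OF _ _ card2 conS' closed']) (use CS SV x in \<open>auto simp: S'_def\<close>)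
  then show ?thesis unfolding S'_def C_def .
qed

lemma end_part_shrink:
  assumes G: "simple_graph V E" and S: "end_part V E S c" and x: "x \<in> S"
    and disc: "\<not> connected_on E (S - {x})"
  obtains S' where "end_part V E S' x" "card S' < card S"
proof -
  obtain w where w: "w \<in> S - {x}" and cC: "c \<notin> component E (S - {x}) w"
    and CS: "component E (S - {x}) w \<subset> S - {x}"
    using disconnected_component_avoiding[OF disc] by blast
  have "insert x (component E (S - {x}) w) \<subset> S" using CS x by blast
  with end_part_finite[OF S] have "card (insert x (component E (S - {x}) w)) < card S"
    by (rule psubset_card_mono)
  with end_part_insert_component[OF G S x w cC] show ?thesis by (rule that)
qed

lemma biconnected_end_part_exists:
  assumes G: "simple_graph V E" and "E \<noteq> {}"
  obtains S c where "end_part V E S c" "biconnected_on V E S"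
proof -
  obtain S0 c0 where "end_part V E S0 c0" using end_part_exists[OF assms] .
  then have "\<exists>S. (\<exists>c. end_part V E S c) \<and> (\<forall>S'. (\<exists>c'. end_part V E S' c') \<longrightarrow> card S \<le> card S')"
    by (intro ex_has_least_nat) blast
  then obtain S where "\<exists>c. end_part V E S c"
    and least: "\<And>S'. \<exists>c'. end_part V E S' c' \<Longrightarrow> card S \<le> card S'" by blast
  then obtain c where S: "end_part V E S c" by blast
  have "connected_on E (S - {x})" if xS: "x \<in> S" for x
  proof (rule ccontr)
    assume "\<not> connected_on E (S - {x})"
    then obtain S' where "end_part V E S' x" "card S' < card S"
      by (rule end_part_shrink[OF G S xS])
    with least[of S'] show False by auto
  qed
  then have "biconnected_on V E S" using end_partD[OF S] unfolding biconnected_on_def by blast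
  with S show ?thesis by (rule that)
qed

lemma end_part_block_vertex:
  assumes S: "end_part V E S c" "biconnected_on V E S" and v: "v \<in> S" "v \<noteq> c"
  shows "block_vertex V E v"
proof -
  have "B = S" if B: "is_block V E B" "v \<in> B" for B
  proof -
    have "connected_on E (B - {c})"
      using B(1) unfolding is_block_def biconnected_on_def by (cases "c \<in> B") auto
    then have "B - {c} \<subseteq> S" using connected_subset_end_part[OF S(1)] B(2) v by blast
    then have "B \<subseteq> S" using end_partD(1)[OF S(1)] by blast
    then show ?thesis using B(1) S(2) unfolding is_block_def by blast
  qed
  then show ?thesis
    using end_partD(2)[OF S(1)] v(1) unfolding block_vertex_def cut_vertex_def by blast
qed

lemma end_part_low_degree:
  assumes G: "simple_graph V E" and S: "end_part V E S c"
    and cover: "\<forall>i<k. f i \<subseteq> E \<and> forest (f i)" "E = (\<Union>i<k. f i)"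
  shows "\<exists>v\<in>S - {c}. degree E v < 2 * k"
proof (rule ccontr)
  assume low: "\<not> ?thesis"
  define ES where "ES = {e \<in> E. e \<subseteq> S}"
  define d where "d v = card {e \<in> ES. v \<in> e}" for v
  have finS: "finite S" using S by (rule end_part_finite)
  have cS: "c \<in> S" using S by (rule end_partD)
  have high: "2 * k \<le> d v" if v: "v \<in> S - {c}" for v
  proof -
    have "{e \<in> E. v \<in> e} = {e \<in> ES. v \<in> e}" using end_part_closed[OF S] v unfolding ES_def by blast
    then have "d v = degree E v" unfolding d_def degree_def by simp
    with low v show ?thesis by (simp add: not_less)
  qed
  have "1 \<le> d c"
  proof -
    have "S \<noteq> {c}" using end_partD(3)[OF S] by auto
    with cS obtain p where "p \<in> S" "p \<noteq> c" by blast
    with cS end_partD(4)[OF S] have "(c, p) \<in> (induced_adj E S)\<^sup>*"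
      unfolding connected_on_iff_induced_adj by blast
    then obtain y where "(c, y) \<in> induced_adj E S"
      using \<open>p \<noteq> c\<close> by (cases rule: converse_rtranclE) auto
    then have "{c, y} \<in> {e \<in> ES. c \<in> e}" unfolding induced_adj_def ES_def by auto
    moreover have "finite {e \<in> ES. c \<in> e}"
      using simple_graph_finite_edges[OF G] unfolding ES_def by simp
    ultimately show ?thesis unfolding d_def by (auto simp: Suc_le_eq card_gt_0_iff)
  qed
  have "(card S - 1) * (2 * k) \<le> (\<Sum>v\<in>S - {c}. d v)"
    using sum_bounded_below[of "S - {c}" "2 * k" d] high card_Diff_singleton[OF cS] by simp
  also have "\<dots> < (\<Sum>v\<in>S. d v)" using \<open>1 \<le> d c\<close> finS cS by (simp add: sum.remove)
  also have "\<dots> = 2 * card ES"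
    unfolding d_def
    by (rule sum_card_incident_edges[OF finS]) (auto simp: ES_def simple_graph_card_edge[OF G])
  also have "\<dots> \<le> 2 * (k * (card S - 1))"
    using card_edges_within_le[OF G finS _ cover] cS unfolding ES_def by auto
  finally show False by (simp add: algebra_simps)
qed

theorem mainTheorem1:
  fixes V :: "'a set" and E :: "'a set set"
  assumes "simple_graph V E"
    and "E \<noteq> {}"
  shows "\<exists>v\<in>V. block_vertex V E v \<and> degree E v \<le> 2 * arboricity E - 1"
proof -
  obtain S c where S: "end_part V E S c" "biconnected_on V E S"
    using biconnected_end_part_exists[OF assms] .
  obtain f where "\<forall>i<arboricity E. f i \<subseteq> E \<and> forest (f i)" "E = (\<Union>i<arboricity E. f i)"
    using arboricity_forest_cover[OF assms(1)] .
  then obtain v where v: "v \<in> S - {c}" "degree E v < 2 * arboricity E"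
    using end_part_low_degree[OF assms(1) S(1)] by blast
  have "block_vertex V E v" using end_part_block_vertex[OF S] v(1) by blast
  moreover have "v \<in> V" using end_partD(2)[OF S(1)] v(1) by blast
  ultimately show ?thesis using v(2) by force
qed

end
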